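(* Let $\mu,\nu,q\in\mathscr{P}_2(\mathbb{R}^d)$ with $\mu\preceq_{\mathrm{c}}\nu$ and $q$ not giving mass to small sets. For every $\psi\in C_2(\mathbb{R}^d)$ we have $\tilde{\mathcal{D}}(\operatorname{conv}\psi)\le\tilde{\mathcal{D}}(\psi)$, and consequently \[ \inf_{\psi\in C_2(\mathbb{R}^d)}\tilde{\mathcal{D}}(\psi)=\inf_{\substack{\psi\in C_2(\mathbb{R}^d),\\ \psi\text{ convex}}}\tilde{\mathcal{D}}(\psi). \]
   Context: $\mathscr{P}_2(\mathbb{R}^d)$: Borel probability measures with finite second moment. $\mu\preceq_{\mathrm{c}}\nu$ means $\int f\,d\mu\le\int f\,d\nu$ for all convex $f:\mathbb{R}^d\to\mathbb{R}$. $q$ does not give mass to small sets: $q(A)=0$ for measurable $A$ of Hausdorff dimension $\le d-1$. $\mathrm{MCov}(\rho,\varrho)\coloneqq\sup_{\tilde\pi\in\mathsf{Cpl}(\rho,\varrho)}\int\langle y,z\rangle\,d\tilde\pi$ over couplings. $C_2(\mathbb{R}^d)$ is the set of continuous $\psi:\mathbb{R}^d\to\mathbb{R}$ such that there exist $a,k,\ell\in\mathbb{R}$ with $\ell+\frac{|y|^2}{2}\le\psi(y)\le a+k|y|^2$ for all $y$. $\operatorname{conv}\psi$ denotes the convex hull of $\psi$, the greatest convex function below $\psi$ (for $\psi\in C_2(\mathbb{R}^d)$ one has $\operatorname{conv}\psi\in C_2(\mathbb{R}^d)$). $\mathscr{P}_2^x(\mathbb{R}^d)$: elements of $\mathscr{P}_2(\mathbb{R}^d)$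 with barycenter $x$. For $\psi\in C_2(\mathbb{R}^d)$: $\varphi^\psi(x)\coloneqq\inf_{p\in\mathscr{P}_2^x(\mathbb{R}^d)}\big(\int\psi\,dp-\mathrm{MCov}(p,q)\big)$ and $\tilde{\mathcal{D}}(\psi)\coloneqq\int\psi\,d\nu-\int\varphi^\psi\,d\mu$. *)

theory Defs
  imports "HOL-Probability.Probability"
begin

definition P2 :: "'a::euclidean_space measure set" where
  "P2 = {M. prob_space M \<and> sets M = sets borel \<and> integrable M (\<lambda>y. (norm y)\<^sup>2)}"

definition P2_bary :: "'a::euclidean_space \<Rightarrow> 'a measure set" where
  "P2_bary x = {p \<in> P2. integral\<^sup>L p (\<lambda>y. y) = x}"

text \<open>Integral of a real function as an extended real: positive part minus negative part
  (well defined for convex functions, which are bounded below by an affine function).\<close>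
definition ext_integral :: "'a measure \<Rightarrow> ('a \<Rightarrow> real) \<Rightarrow> ereal" where
  "ext_integral M f =
     enn2ereal (\<integral>\<^sup>+ x. ennreal (f x) \<partial>M) - enn2ereal (\<integral>\<^sup>+ x. ennreal (- f x) \<partial>M)"

definition convex_order :: "'a::euclidean_space measure \<Rightarrow> 'a measure \<Rightarrow> bool" where
  "convex_order \<mu> \<nu> \<longleftrightarrow>
     (\<forall>f::'a \<Rightarrow> real. convex_on UNIV f \<longrightarrow> ext_integral \<mu> f \<le> ext_integral \<nu> f)"

definition hd_term :: "real \<Rightarrow> 'a::metric_space set \<Rightarrow> real" where
  "hd_term s C = (if C = {} then 0 else if s = 0 then 1 else diameter C powr s)"

definition hausdorff_pre :: "real \<Rightarrow> real \<Rightarrow> 'a::metric_space set \<Rightarrow> ennreal" where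
  "hausdorff_pre s \<delta> A =
     (INF C \<in> {C :: nat \<Rightarrow> 'a set. A \<subseteq> (\<Union>i. C i) \<and> (\<forall>i. bounded (C i) \<and> diameter (C i) \<le> \<delta>)}.
        (\<Sum>i. ennreal (hd_term s (C i))))"

definition hausdorff_measure :: "real \<Rightarrow> 'a::metric_space set \<Rightarrow> ennreal" where
  "hausdorff_measure s A = (SUP \<delta> \<in> {0<..}. hausdorff_pre s \<delta> A)"

definition hausdorff_dim :: "'a::metric_space set \<Rightarrow> ereal" where
  "hausdorff_dim A = Inf {ereal s | s. 0 \<le> s \<and> hausdorff_measure s A = 0}"

definition no_mass_small_sets :: "'a::euclidean_space measure \<Rightarrow> bool" where
  "no_mass_small_sets q \<longleftrightarrow>
     (\<forall>A \<in> sets borel. hausdorff_dim (A :: 'a set) \<le> ereal (real DIM('a) - 1) \<longrightarrow> emeasure q A = 0)"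

definition Cpl :: "'a::euclidean_space measure \<Rightarrow> 'a measure \<Rightarrow> ('a \<times> 'a) measure set" where
  "Cpl \<rho> \<sigma> = {\<pi>. prob_space \<pi> \<and> sets \<pi> = sets (borel \<Otimes>\<^sub>M borel) \<and>
                  distr \<pi> borel fst = \<rho> \<and> distr \<pi> borel snd = \<sigma>}"

definition MCov :: "'a::euclidean_space measure \<Rightarrow> 'a measure \<Rightarrow> real" where
  "MCov \<rho> \<sigma> = (SUP \<pi> \<in> Cpl \<rho> \<sigma>. integral\<^sup>L \<pi> (\<lambda>(y, z). inner y z))"

definition C2 :: "('a::euclidean_space \<Rightarrow> real) set" where
  "C2 = {\<psi>. continuous_on UNIV \<psi> \<and>
            (\<exists>a k l. \<forall>y. l + (norm y)\<^sup>2 / 2 \<le> \<psi> y \<and> \<psi> y \<le> a + k * (norm y)\<^sup>2)}"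

definition conv_fun :: "('a::euclidean_space \<Rightarrow> real) \<Rightarrow> 'a \<Rightarrow> real" where
  "conv_fun \<psi> = (\<lambda>x. Sup {g x | g. convex_on UNIV g \<and> (\<forall>y. g y \<le> \<psi> y)})"

definition phi :: "'a::euclidean_space measure \<Rightarrow> ('a \<Rightarrow> real) \<Rightarrow> 'a \<Rightarrow> real" where
  "phi q \<psi> x = (INF p \<in> P2_bary x. integral\<^sup>L p \<psi> - MCov p q)"

definition Dtilde :: "'a::euclidean_space measure \<Rightarrow> 'a measure \<Rightarrow> 'a measure
                      \<Rightarrow> ('a \<Rightarrow> real) \<Rightarrow> real" where
  "Dtilde \<mu> \<nu> q \<psi> = integral\<^sup>L \<nu> \<psi> - integral\<^sup>L \<mu> (phi q \<psi>)"

end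

theory Submission
  imports Defs
begin

text \<open>Since \<open>conv_fun \<psi> \<le> \<psi>\<close>, it suffices to show \<open>phi q (conv_fun \<psi>) = phi q \<psi>\<close>. The value
  \<open>conv_fun \<psi> y\<close> is approached by averages of \<open>\<psi>\<close> over finitely supported laws with barycenter
  \<open>y\<close>; translating such laws and selecting them along a countable open cover gives a measurable
  mean-preserving kernel \<open>K\<close> with \<open>\<integral>\<psi> dK(y) \<le> conv_fun \<psi> y + \<epsilon>\<close>. For \<open>p\<close> with barycenter
  \<open>x\<close>, the law \<open>p \<bind> K\<close> again has barycenter \<open>x\<close>, satisfies
  \<open>\<integral>\<psi> d(p \<bind> K) \<le> \<integral>conv_fun \<psi> dp + \<epsilon>\<close>, and has at least the maximal covariance of \<open>p\<close> with
  \<open>q\<close>: a coupling of \<open>p\<close> and \<open>q\<close> carried along \<open>K\<close> is a coupling of \<open>p \<bind> K\<close> and \<open>q\<close> with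
  the same covariance.\<close>

lemma P2_D:
  assumes "p \<in> P2"
  shows "prob_space p" "sets p = sets borel" "space p = UNIV" "integrable p (\<lambda>y. (norm y)\<^sup>2)"
  using assms unfolding P2_def by (auto dest: sets_eq_imp_space_eq)

lemma measurable_P2:
  assumes "p \<in> P2" "f \<in> borel \<rightarrow>\<^sub>M N"
  shows "f \<in> p \<rightarrow>\<^sub>M N"
  using assms by (subst measurable_cong_sets[OF P2_D(2)[OF assms(1)] refl])

lemma integrable_P2_quadratic_bound:
  fixes f :: "'a::euclidean_space \<Rightarrow> 'b::{banach, second_countable_topology}"
  assumes p: "p \<in> P2" and f: "f \<in> borel_measurable borel"
    and bound: "\<And>y. norm (f y) \<le> A + B * (norm y)\<^sup>2"
  shows "integrable p f"
proof (rule Bochner_Integration.integrable_bound)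
  interpret prob_space p using P2_D(1)[OF p] .
  show "integrable p (\<lambda>y. \<bar>A\<bar> + \<bar>B\<bar> * (norm y)\<^sup>2)"
    using P2_D(4)[OF p] by (intro Bochner_Integration.integrable_add integrable_mult_right) auto
  show "AE y in p. norm (f y) \<le> norm (\<bar>A\<bar> + \<bar>B\<bar> * (norm y)\<^sup>2)"
  proof (rule AE_I2)
    fix y :: 'a
    have "norm (f y) \<le> \<bar>A\<bar> + \<bar>B\<bar> * (norm y)\<^sup>2"
      using bound[of y] abs_ge_self[of A] mult_right_mono[OF abs_ge_self[of B] zero_le_power2[of "norm y"]]
      by linarith
    then show "norm (f y) \<le> norm (\<bar>A\<bar> + \<bar>B\<bar> * (norm y)\<^sup>2)"
      by simp
  qed
qed (rule measurable_P2[OF p f])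

lemma integrable_P2_id:
  assumes "p \<in> P2"
  shows "integrable p (\<lambda>y. y)"
proof (rule integrable_P2_quadratic_bound[OF assms, where A = 1 and B = 1])
  fix y :: 'a
  have "2 * norm y \<le> (norm y)\<^sup>2 + 1"
    using zero_le_power2[of "norm y - 1"] by (simp add: power2_diff)
  then show "norm y \<le> 1 + 1 * (norm y)\<^sup>2"
    using norm_ge_zero[of y] by linarith
qed simp

lemma return_in_P2_bary: "return borel x \<in> P2_bary x"
proof -
  have "integrable (return borel x) (\<lambda>y. (norm y)\<^sup>2)"
    by (rule integrableI_nonneg) (auto simp: nn_integral_return)
  then show ?thesis
    unfolding P2_bary_def P2_def by (auto intro: prob_space_return integral_return)
qed

section \<open>The class C2 and the convex hull of a function\<close>

lemma convex_on_half_norm_square: "convex_on UNIV (\<lambda>y::'a::real_normed_vector. l + (norm y)\<^sup>2 / 2)"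
proof -
  have "convex_on UNIV (\<lambda>y::'a. (norm y)\<^sup>2)"
  proof (rule convex_onI)
    fix t :: real and x y :: 'a
    assume t: "0 < t" "t < 1"
    have "(norm ((1 - t) *\<^sub>R x + t *\<^sub>R y))\<^sup>2 \<le> ((1 - t) * norm x + t * norm y)\<^sup>2"
      using t norm_triangle_ineq[of "(1 - t) *\<^sub>R x" "t *\<^sub>R y"] by (intro power_mono) auto
    also have "\<dots> \<le> (1 - t) * (norm x)\<^sup>2 + t * (norm y)\<^sup>2"
      using t convex_onD[OF convex_power2, of t "norm x" "norm y"] by simp
    finally show "(norm ((1 - t) *\<^sub>R x + t *\<^sub>R y))\<^sup>2 \<le> (1 - t) * (norm x)\<^sup>2 + t * (norm y)\<^sup>2" .
  qed simp
  then show ?thesis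
    by (intro convex_on_add convex_on_cmul) (auto simp: convex_on_const)
qed

lemma C2_D:
  assumes "\<psi> \<in> C2"
  shows "\<psi> \<in> borel_measurable borel" "continuous_on UNIV \<psi>"
  using assms unfolding C2_def by (auto intro: borel_measurable_continuous_onI)

lemma C2_E:
  assumes "\<psi> \<in> C2"
  obtains l a k where "\<And>y. l + (norm y)\<^sup>2 / 2 \<le> \<psi> y" and "\<And>y. \<psi> y \<le> a + k * (norm y)\<^sup>2"
  using assms unfolding C2_def by blast

lemma integrable_C2:
  assumes "\<psi> \<in> C2" and "p \<in> P2"
  shows "integrable p \<psi>"
proof -
  obtain l a k where lower: "\<And>y. l + (norm y)\<^sup>2 / 2 \<le> \<psi> y" and upper: "\<And>y. \<psi> y \<le> a + k * (norm y)\<^sup>2"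
    using C2_E[OF assms(1)] by metis
  have "norm (\<psi> y) \<le> (\<bar>a\<bar> + \<bar>l\<bar>) + (\<bar>k\<bar> + 1) * (norm y)\<^sup>2" for y
    using lower[of y] upper[of y] abs_ge_self[of a] abs_ge_minus_self[of l] zero_le_power2[of "norm y"]
      mult_right_mono[OF abs_ge_self[of k] zero_le_power2[of "norm y"]]
      mult_nonneg_nonneg[OF abs_ge_zero[of k] zero_le_power2[of "norm y"]]
    unfolding real_norm_def abs_le_iff distrib_right mult_1 by (intro conjI; linarith)
  then show ?thesis
    by (rule integrable_P2_quadratic_bound[OF assms(2) C2_D(1)[OF assms(1)]])
qed

lemma conv_fun_greatest:
  assumes "convex_on UNIV g" "\<And>y. g y \<le> \<psi> y"
  shows "g x \<le> conv_fun \<psi> x"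
  unfolding conv_fun_def
  by (rule cSup_upper) (use assms in \<open>auto intro!: bdd_aboveI[where M = "\<psi> x"]\<close>)

lemma conv_fun_le:
  assumes "convex_on UNIV g" "\<And>y. g y \<le> \<psi> y"
  shows "conv_fun \<psi> x \<le> \<psi> x"
  unfolding conv_fun_def by (rule cSup_least) (use assms in auto)

lemma convex_on_conv_fun:
  assumes "convex_on UNIV g" "\<And>y. g y \<le> \<psi> y"
  shows "convex_on UNIV (conv_fun \<psi>)"
proof (rule convex_onI)
  fix t :: real and x y :: 'a
  assume t: "0 < t" "t < 1"
  show "conv_fun \<psi> ((1 - t) *\<^sub>R x + t *\<^sub>R y) \<le> (1 - t) * conv_fun \<psi> x + t * conv_fun \<psi> y"
    unfolding conv_fun_def[of \<psi>, THEN fun_cong, of "(1 - t) *\<^sub>R x + t *\<^sub>R y"]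
  proof (rule cSup_least)
    fix v assume "v \<in> {h ((1 - t) *\<^sub>R x + t *\<^sub>R y) |h. convex_on UNIV h \<and> (\<forall>y. h y \<le> \<psi> y)}"
    then obtain h where h: "convex_on UNIV h" "\<And>y. h y \<le> \<psi> y" and v: "v = h ((1 - t) *\<^sub>R x + t *\<^sub>R y)"
      by blast
    have "v \<le> (1 - t) * h x + t * h y"
      using convex_onD[OF h(1), of t x y] t v by auto
    also have "\<dots> \<le> (1 - t) * conv_fun \<psi> x + t * conv_fun \<psi> y"
      using conv_fun_greatest[OF h, of x] conv_fun_greatest[OF h, of y] t
      by (intro add_mono mult_left_mono) auto
    finally show "v \<le> (1 - t) * conv_fun \<psi> x + t * conv_fun \<psi> y" .
  qed (use assms in blast)
qed simp

lemma
  assumes "\<psi> \<in> C2"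
  shows conv_fun_le_C2: "conv_fun \<psi> y \<le> \<psi> y"
    and convex_on_conv_fun_C2: "convex_on UNIV (conv_fun \<psi>)"
proof -
  obtain l where "\<And>y. l + (norm y)\<^sup>2 / 2 \<le> \<psi> y"
    using C2_E[OF assms] by metis
  from conv_fun_le[OF convex_on_half_norm_square this] convex_on_conv_fun[OF convex_on_half_norm_square this]
  show "conv_fun \<psi> y \<le> \<psi> y" "convex_on UNIV (conv_fun \<psi>)" .
qed

lemma conv_fun_in_C2:
  assumes "\<psi> \<in> C2"
  shows "conv_fun \<psi> \<in> C2"
proof -
  obtain l a k where lower: "\<And>y. l + (norm y)\<^sup>2 / 2 \<le> \<psi> y" and upper: "\<And>y. \<psi> y \<le> a + k * (norm y)\<^sup>2"
    using C2_E[OF assms] by metis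
  have "continuous_on UNIV (conv_fun \<psi>)"
    by (rule convex_on_continuous[OF open_UNIV convex_on_conv_fun_C2[OF assms]])
  moreover have "l + (norm y)\<^sup>2 / 2 \<le> conv_fun \<psi> y \<and> conv_fun \<psi> y \<le> a + k * (norm y)\<^sup>2" for y
    using conv_fun_greatest[OF convex_on_half_norm_square lower] conv_fun_le_C2[OF assms, of y] upper[of y]
    by fastforce
  ultimately show ?thesis
    unfolding C2_def by blast
qed

lemma convex_on_Inf_fibre:
  fixes H :: "('a::real_vector \<times> real) set"
  assumes H: "convex H" and ne: "\<And>x. \<exists>t. (x, t) \<in> H" and bdd: "\<And>x. bdd_below {t. (x, t) \<in> H}"
  shows "convex_on UNIV (\<lambda>x. Inf {t. (x, t) \<in> H})"
proof (rule convex_onI)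
  define f where "f x = Inf {t. (x, t) \<in> H}" for x
  have f_le: "f x \<le> t" if "(x, t) \<in> H" for x t
    unfolding f_def using that bdd by (intro cInf_lower) auto
  have f_approx: "\<exists>t. (x, t) \<in> H \<and> t < f x + e" if "0 < e" for x e
    using cInf_lessD[of "{t. (x, t) \<in> H}" "f x + e"] ne[of x] that unfolding f_def by auto
  fix t :: real and x y :: 'a
  assume t: "0 < t" "t < 1"
  show "f ((1 - t) *\<^sub>R x + t *\<^sub>R y) \<le> (1 - t) * f x + t * f y"
  proof (rule field_le_epsilon)
    fix e :: real assume "0 < e"
    then obtain s r where s: "(x, s) \<in> H" "s < f x + e" and r: "(y, r) \<in> H" "r < f y + e"
      using f_approx by blast
    have "(1 - t) *\<^sub>R (x, s) + t *\<^sub>R (y, r) \<in> H"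
      using t by (intro convexD[OF H s(1) r(1)]) auto
    then have "f ((1 - t) *\<^sub>R x + t *\<^sub>R y) \<le> (1 - t) * s + t * r"
      by (intro f_le) simp
    also have "\<dots> \<le> (1 - t) * (f x + e) + t * (f y + e)"
      using s r t by (intro add_mono mult_left_mono) auto
    finally show "f ((1 - t) *\<^sub>R x + t *\<^sub>R y) \<le> (1 - t) * f x + t * f y + e"
      by (simp add: algebra_simps)
  qed
qed simp

lemma ex_pmf_with_weights:
  assumes "finite S" "\<And>s. s \<in> S \<Longrightarrow> 0 \<le> u s" "sum u S = 1"
  shows "\<exists>W. set_pmf W \<subseteq> S \<and> (\<forall>s\<in>S. pmf W s = u s)"
proof -
  define w where "w s = (if s \<in> S then u s else 0)" for s
  have w_nonneg: "0 \<le> w s" for s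
    using assms(2) unfolding w_def by auto
  have "(\<integral>\<^sup>+ s. ennreal (w s) \<partial>count_space UNIV) = ennreal (sum w S)"
    using assms(1) w_nonneg by (subst nn_integral_count_space') (auto simp: w_def sum_ennreal)
  also have "sum w S = 1"
    using assms(3) unfolding w_def by simp
  finally have "pmf (embed_pmf w) s = w s" for s
    using w_nonneg by (intro pmf_embed_pmf) auto
  then show ?thesis
    by (intro exI[of _ "embed_pmf w"]) (auto simp: set_pmf_iff w_def split: if_splits)
qed

text \<open>The lower boundary of the convex hull of the epigraph of \<open>\<psi>\<close> is a convex minorant of
  \<open>\<psi>\<close>, so that hull contains points \<open>(y, t)\<close> with \<open>t\<close> close to \<open>conv_fun \<psi> y\<close>; each of them
  is a finite convex combination of points of the epigraph.\<close>

lemma conv_fun_finite_approx: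
  fixes \<psi> :: "'a::euclidean_space \<Rightarrow> real"
  assumes g: "convex_on UNIV g" "\<And>y. g y \<le> \<psi> y" and "0 < \<epsilon>"
  shows "\<exists>W :: 'a pmf. finite (set_pmf W) \<and> (\<integral>v. v \<partial>W) = y \<and> (\<integral>v. \<psi> v \<partial>W) < conv_fun \<psi> y + \<epsilon>"
proof -
  define H where "H = convex hull (epigraph UNIV \<psi>)"
  have graph_in_H: "(x, \<psi> x) \<in> H" for x
    unfolding H_def by (rule hull_inc) (simp add: epigraph_def)
  have "H \<subseteq> epigraph UNIV g"
    unfolding H_def using g by (intro hull_minimal convex_epigraphI) (auto simp: epigraph_def intro: order_trans)
  then have bdd: "bdd_below {t. (x, t) \<in> H}" for x
    by (intro bdd_belowI[where m = "g x"]) (auto simp: epigraph_def)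
  have "Inf {t. (x, t) \<in> H} \<le> \<psi> x" for x
    using graph_in_H bdd by (intro cInf_lower) auto
  then have "Inf {t. (y, t) \<in> H} \<le> conv_fun \<psi> y"
    using graph_in_H bdd by (intro conv_fun_greatest convex_on_Inf_fibre) (auto simp: H_def)
  then obtain t where t: "(y, t) \<in> H" "t < conv_fun \<psi> y + \<epsilon>"
    using cInf_lessD[of "{t. (y, t) \<in> H}" "conv_fun \<psi> y + \<epsilon>"] graph_in_H \<open>0 < \<epsilon>\<close> by force
  then obtain S u where S: "finite S" "S \<subseteq> epigraph UNIV \<psi>" "\<And>s. s \<in> S \<Longrightarrow> 0 \<le> u s" "sum u S = 1"
    "(\<Sum>s\<in>S. u s *\<^sub>R s) = (y, t)"
    unfolding H_def convex_hull_explicit by blast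
  obtain W0 where W0: "set_pmf W0 \<subseteq> S" "\<And>s. s \<in> S \<Longrightarrow> pmf W0 s = u s"
    using ex_pmf_with_weights[OF S(1,3,4)] by blast
  define W where "W = map_pmf fst W0"
  have "finite (set_pmf W)"
    unfolding W_def using W0(1) S(1) by (auto intro: finite_subset)
  moreover have "(\<integral>v. v \<partial>W) = y"
  proof -
    have "(\<integral>v. v \<partial>W) = (\<Sum>s\<in>S. u s *\<^sub>R fst s)"
      unfolding W_def using W0 S(1) by (subst integral_map_pmf, subst integral_measure_pmf[of S]) auto
    also have "\<dots> = y"
      using arg_cong[OF S(5), of fst] by (simp add: fst_sum)
    finally show ?thesis .
  qed
  moreover have "(\<integral>v. \<psi> v \<partial>W) < conv_fun \<psi> y + \<epsilon>"
  proof -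
    have "(\<integral>v. \<psi> v \<partial>W) = (\<Sum>s\<in>S. \<psi> (fst s) * u s)"
      unfolding W_def using W0 S(1) by (subst integral_map_pmf, subst integral_measure_pmf_real[of S]) auto
    also have "\<dots> \<le> (\<Sum>s\<in>S. snd s * u s)"
      using S(2,3) by (intro sum_mono mult_right_mono) (auto simp: epigraph_def)
    also have "\<dots> = t"
      using arg_cong[OF S(5), of snd] by (simp add: snd_sum mult.commute)
    finally show ?thesis using t(2) by linarith
  qed
  ultimately show ?thesis by blast
qed

section \<open>Integrals against a composition of kernels\<close>

lemma integral_bind_kernel_nonneg:
  fixes g :: "'b \<Rightarrow> real"
  assumes N: "N \<in> M \<rightarrow>\<^sub>M subprob_algebra B" and g: "g \<in> borel_measurable B"
    and nonneg: "\<And>y. 0 \<le> g y" and int: "integrable (M \<bind> N) g" and ne: "space M \<noteq> {}"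
  shows "AE x in M. integrable (N x) g" "integrable M (\<lambda>x. integral\<^sup>L (N x) g)"
    "integral\<^sup>L (M \<bind> N) g = (\<integral>x. integral\<^sup>L (N x) g \<partial>M)"
proof -
  define I where "I x = (\<integral>\<^sup>+ y. ennreal (g y) \<partial>N x)" for x
  have I_measurable: "I \<in> borel_measurable M"
    unfolding I_def using N g by measurable
  have bind_eq: "(\<integral>\<^sup>+ y. ennreal (g y) \<partial>(M \<bind> N)) = (\<integral>\<^sup>+ x. I x \<partial>M)"
    unfolding I_def by (rule nn_integral_bind[OF _ N]) (use g in measurable)
  then have I_finite: "(\<integral>\<^sup>+ x. I x \<partial>M) \<noteq> \<infinity>"
    using integrableD(2)[OF int] by simp
  have AE_finite: "AE x in M. I x \<noteq> \<infinity>"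
    by (rule nn_integral_PInf_AE[OF I_measurable I_finite])
  have g_N: "g \<in> borel_measurable (N x)" if "x \<in> space M" for x
    using g by (subst measurable_cong_sets[OF sets_kernel[OF N that] refl])
  have int_N: "integrable (N x) g" and eq_N: "integral\<^sup>L (N x) g = enn2real (I x)"
    if "x \<in> space M" "I x \<noteq> \<infinity>" for x
    using that g_N[OF that(1)] nonneg unfolding I_def
    by (auto intro!: integrableI_nonneg integral_eq_nn_integral simp: less_top)
  show "AE x in M. integrable (N x) g"
    using AE_finite AE_space by eventually_elim (use int_N in auto)
  have inner_measurable: "(\<lambda>x. integral\<^sup>L (N x) g) \<in> borel_measurable M"
    using N g by measurable
  have inner_nn: "(\<integral>\<^sup>+ x. ennreal (integral\<^sup>L (N x) g) \<partial>M) = (\<integral>\<^sup>+ x. I x \<partial>M)"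
    using AE_finite AE_space
    by (intro nn_integral_cong_AE, eventually_elim) (use eq_N in \<open>auto simp: less_top\<close>)
  show "integrable M (\<lambda>x. integral\<^sup>L (N x) g)"
    using inner_measurable inner_nn I_finite nonneg
    by (intro integrableI_nonneg) (auto simp: less_top intro!: integral_nonneg_AE)
  have "g \<in> borel_measurable (M \<bind> N)"
    using g by (subst measurable_cong_sets[OF sets_bind[OF sets_kernel[OF N] ne] refl])
  then have "integral\<^sup>L (M \<bind> N) g = enn2real (\<integral>\<^sup>+ y. ennreal (g y) \<partial>(M \<bind> N))"
    using nonneg by (intro integral_eq_nn_integral) auto
  also have "\<dots> = enn2real (\<integral>\<^sup>+ x. ennreal (integral\<^sup>L (N x) g) \<partial>M)"
    using bind_eq inner_nn by simp
  also have "\<dots> = (\<integral>x. integral\<^sup>L (N x) g \<partial>M)"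
    using inner_measurable nonneg by (intro integral_eq_nn_integral[symmetric]) (auto intro!: integral_nonneg_AE)
  finally show "integral\<^sup>L (M \<bind> N) g = (\<integral>x. integral\<^sup>L (N x) g \<partial>M)" .
qed

lemma integral_bind_kernel:
  fixes f :: "'b \<Rightarrow> real"
  assumes N: "N \<in> M \<rightarrow>\<^sub>M subprob_algebra B" and f: "f \<in> borel_measurable B"
    and int: "integrable (M \<bind> N) f" and ne: "space M \<noteq> {}"
  shows "integrable M (\<lambda>x. integral\<^sup>L (N x) f)"
    "integral\<^sup>L (M \<bind> N) f = (\<integral>x. integral\<^sup>L (N x) f \<partial>M)"
proof -
  define P where "P y = max 0 (f y)" for y
  define Q where "Q y = max 0 (- f y)" for y
  have f_eq: "f = (\<lambda>y. P y - Q y)"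
    unfolding P_def Q_def by auto
  have P: "P \<in> borel_measurable B" "integrable (M \<bind> N) P" "0 \<le> P y"
    and Q: "Q \<in> borel_measurable B" "integrable (M \<bind> N) Q" "0 \<le> Q y" for y
    unfolding P_def Q_def using f int by (auto intro!: integrable_max)
  note RP = integral_bind_kernel_nonneg[OF N P(1,3) P(2) ne]
  note RQ = integral_bind_kernel_nonneg[OF N Q(1,3) Q(2) ne]
  have AE_eq: "AE x in M. integral\<^sup>L (N x) f = integral\<^sup>L (N x) P - integral\<^sup>L (N x) Q"
    using RP(1) RQ(1) by eventually_elim (simp add: f_eq Bochner_Integration.integral_diff)
  have measurable: "(\<lambda>x. integral\<^sup>L (N x) f) \<in> borel_measurable M"
    "(\<lambda>x. integral\<^sup>L (N x) P - integral\<^sup>L (N x) Q) \<in> borel_measurable M"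
    using N f P(1) Q(1) by measurable
  have int_PQ: "integrable M (\<lambda>x. integral\<^sup>L (N x) P - integral\<^sup>L (N x) Q)"
    using RP(2) RQ(2) by (rule Bochner_Integration.integrable_diff)
  show "integrable M (\<lambda>x. integral\<^sup>L (N x) f)"
    using integrable_cong_AE[OF measurable AE_eq] int_PQ by simp
  have "(\<integral>x. integral\<^sup>L (N x) f \<partial>M) = (\<integral>x. integral\<^sup>L (N x) P - integral\<^sup>L (N x) Q \<partial>M)"
    by (rule integral_cong_AE[OF measurable AE_eq])
  also have "\<dots> = integral\<^sup>L (M \<bind> N) P - integral\<^sup>L (M \<bind> N) Q"
    using RP(2,3) RQ(2,3) by (simp add: Bochner_Integration.integral_diff)
  also have "\<dots> = integral\<^sup>L (M \<bind> N) f"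
    using P(2) Q(2) by (simp add: f_eq Bochner_Integration.integral_diff)
  finally show "integral\<^sup>L (M \<bind> N) f = (\<integral>x. integral\<^sup>L (N x) f \<partial>M)" ..
qed

lemma abs_inner_le_half_sum_squares:
  fixes y z :: "'a::real_inner"
  shows "\<bar>y \<bullet> z\<bar> \<le> ((norm y)\<^sup>2 + (norm z)\<^sup>2) / 2"
proof -
  have "(norm (y - z))\<^sup>2 = (norm y)\<^sup>2 - 2 * (y \<bullet> z) + (norm z)\<^sup>2"
    "(norm (y + z))\<^sup>2 = (norm y)\<^sup>2 + 2 * (y \<bullet> z) + (norm z)\<^sup>2"
    unfolding power2_norm_eq_inner by (simp_all add: algebra_simps inner_commute)
  then show ?thesis
    using zero_le_power2[of "norm (y - z)"] zero_le_power2[of "norm (y + z)"] by (simp add: abs_le_iff)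
qed

lemma Cpl_D:
  assumes "\<pi> \<in> Cpl \<rho> \<sigma>"
  shows "prob_space \<pi>" "sets \<pi> = sets (borel \<Otimes>\<^sub>M borel)" "distr \<pi> borel fst = \<rho>" "distr \<pi> borel snd = \<sigma>"
  using assms unfolding Cpl_def by auto

lemma measurable_Cpl:
  assumes "\<pi> \<in> Cpl \<rho> \<sigma>" "f \<in> borel \<Otimes>\<^sub>M borel \<rightarrow>\<^sub>M N"
  shows "f \<in> \<pi> \<rightarrow>\<^sub>M N"
  using assms(2) by (subst measurable_cong_sets[OF Cpl_D(2)[OF assms(1)] refl])

lemma integrable_inner_Cpl:
  assumes \<rho>: "\<rho> \<in> P2" and \<sigma>: "\<sigma> \<in> P2" and \<pi>: "\<pi> \<in> Cpl \<rho> \<sigma>"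
  shows "integrable \<pi> (\<lambda>(y, z). y \<bullet> z)"
    and "integral\<^sup>L \<pi> (\<lambda>(y, z). y \<bullet> z) \<le> ((\<integral>y. (norm y)\<^sup>2 \<partial>\<rho>) + (\<integral>z. (norm z)\<^sup>2 \<partial>\<sigma>)) / 2"
proof -
  have fst: "fst \<in> \<pi> \<rightarrow>\<^sub>M borel" and snd: "snd \<in> \<pi> \<rightarrow>\<^sub>M borel"
    by (auto intro: measurable_Cpl[OF \<pi>])
  let ?h = "\<lambda>w. ((norm (fst w))\<^sup>2 + (norm (snd w))\<^sup>2) / 2"
  have int_h: "integrable \<pi> ?h"
    using integrable_distr_eq[OF fst, of "\<lambda>y. (norm y)\<^sup>2"] integrable_distr_eq[OF snd, of "\<lambda>y. (norm y)\<^sup>2"]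
      P2_D(4)[OF \<rho>] P2_D(4)[OF \<sigma>] Cpl_D(3,4)[OF \<pi>] by auto
  have bound: "\<bar>(\<lambda>(y, z). y \<bullet> z) w\<bar> \<le> ?h w" for w :: "'a \<times> 'a"
    using abs_inner_le_half_sum_squares[of "fst w" "snd w"] by (cases w) auto
  show int: "integrable \<pi> (\<lambda>(y, z). y \<bullet> z)"
    using bound by (intro Bochner_Integration.integrable_bound[OF int_h measurable_Cpl[OF \<pi>] AE_I2]) auto
  have "integral\<^sup>L \<pi> (\<lambda>(y, z). y \<bullet> z) \<le> integral\<^sup>L \<pi> ?h"
    by (intro integral_mono[OF int int_h] order_trans[OF abs_ge_self bound])
  also have "\<dots> = ((\<integral>y. (norm y)\<^sup>2 \<partial>\<rho>) + (\<integral>z. (norm z)\<^sup>2 \<partial>\<sigma>)) / 2"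
    using integral_distr[OF fst, of "\<lambda>y. (norm y)\<^sup>2"] integral_distr[OF snd, of "\<lambda>y. (norm y)\<^sup>2"]
      integrable_distr_eq[OF fst, of "\<lambda>y. (norm y)\<^sup>2"] integrable_distr_eq[OF snd, of "\<lambda>y. (norm y)\<^sup>2"]
      P2_D(4)[OF \<rho>] P2_D(4)[OF \<sigma>] Cpl_D(3,4)[OF \<pi>] by simp
  finally show "integral\<^sup>L \<pi> (\<lambda>(y, z). y \<bullet> z) \<le> ((\<integral>y. (norm y)\<^sup>2 \<partial>\<rho>) + (\<integral>z. (norm z)\<^sup>2 \<partial>\<sigma>)) / 2" .
qed

lemma pair_measure_in_Cpl:
  assumes \<rho>: "\<rho> \<in> P2" and \<sigma>: "\<sigma> \<in> P2"
  shows "\<rho> \<Otimes>\<^sub>M \<sigma> \<in> Cpl \<rho> \<sigma>"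
proof -
  interpret R: prob_space \<rho> using P2_D[OF \<rho>] by simp
  interpret S: prob_space \<sigma> using P2_D[OF \<sigma>] by simp
  interpret pair_prob_space \<rho> \<sigma> ..
  have sets_pair: "sets (\<rho> \<Otimes>\<^sub>M \<sigma>) = sets (borel \<Otimes>\<^sub>M borel)"
    by (rule sets_pair_measure_cong[OF P2_D(2)[OF \<rho>] P2_D(2)[OF \<sigma>]])
  have "distr (\<rho> \<Otimes>\<^sub>M \<sigma>) borel fst = distr (\<rho> \<Otimes>\<^sub>M \<sigma>) \<rho> fst"
    by (rule distr_cong) (auto simp: P2_D(2)[OF \<rho>])
  also have "\<dots> = \<rho>" by (rule S.distr_pair_fst)
  finally have "distr (\<rho> \<Otimes>\<^sub>M \<sigma>) borel fst = \<rho>" .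
  moreover have "distr (\<rho> \<Otimes>\<^sub>M \<sigma>) borel snd = distr (\<rho> \<Otimes>\<^sub>M \<sigma>) \<sigma> snd"
    by (rule distr_cong) (auto simp: P2_D(2)[OF \<sigma>])
  moreover have "distr (\<rho> \<Otimes>\<^sub>M \<sigma>) \<sigma> snd = \<sigma>"
  proof (rule measure_eqI)
    fix A assume A: "A \<in> sets (distr (\<rho> \<Otimes>\<^sub>M \<sigma>) \<sigma> snd)"
    then have "emeasure (distr (\<rho> \<Otimes>\<^sub>M \<sigma>) \<sigma> snd) A = emeasure (\<rho> \<Otimes>\<^sub>M \<sigma>) (space \<rho> \<times> A)"
      by (auto simp: emeasure_distr space_pair_measure dest: sets.sets_into_space
          intro!: arg_cong2[where f = emeasure])
    with A show "emeasure (distr (\<rho> \<Otimes>\<^sub>M \<sigma>) \<sigma> snd) A = emeasure \<sigma> A"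
      by (simp add: S.emeasure_pair_measure_Times R.emeasure_space_1)
  qed simp
  moreover have "prob_space (\<rho> \<Otimes>\<^sub>M \<sigma>)" by (rule prob_space_pair) unfold_locales
  ultimately show ?thesis
    using sets_pair unfolding Cpl_def by auto
qed

lemma
  assumes \<rho>: "\<rho> \<in> P2" and \<sigma>: "\<sigma> \<in> P2"
  shows MCov_le_second_moments: "MCov \<rho> \<sigma> \<le> ((\<integral>y. (norm y)\<^sup>2 \<partial>\<rho>) + (\<integral>z. (norm z)\<^sup>2 \<partial>\<sigma>)) / 2"
    and integral_inner_le_MCov: "\<pi> \<in> Cpl \<rho> \<sigma> \<Longrightarrow> integral\<^sup>L \<pi> (\<lambda>(y, z). y \<bullet> z) \<le> MCov \<rho> \<sigma>"
proof -
  show "MCov \<rho> \<sigma> \<le> ((\<integral>y. (norm y)\<^sup>2 \<partial>\<rho>) + (\<integral>z. (norm z)\<^sup>2 \<partial>\<sigma>)) / 2"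
    unfolding MCov_def using pair_measure_in_Cpl[OF \<rho> \<sigma>] integrable_inner_Cpl(2)[OF \<rho> \<sigma>]
    by (intro cSUP_least) auto
  show "\<pi> \<in> Cpl \<rho> \<sigma> \<Longrightarrow> integral\<^sup>L \<pi> (\<lambda>(y, z). y \<bullet> z) \<le> MCov \<rho> \<sigma>"
    unfolding MCov_def using integrable_inner_Cpl(2)[OF \<rho> \<sigma>]
    by (intro cSUP_upper bdd_aboveI[where M = "((\<integral>y. (norm y)\<^sup>2 \<partial>\<rho>) + (\<integral>z. (norm z)\<^sup>2 \<partial>\<sigma>)) / 2"]) auto
qed

section \<open>Mean-preserving kernels\<close>

definition mean_preserving_kernel :: "('a::euclidean_space \<Rightarrow> 'a measure) \<Rightarrow> bool" where
  "mean_preserving_kernel K \<longleftrightarrow> K \<in> borel \<rightarrow>\<^sub>M subprob_algebra borel \<and>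
     (\<forall>y. prob_space (K y) \<and> sets (K y) = sets borel \<and> integrable (K y) (\<lambda>v. v) \<and> (\<integral>v. v \<partial>K y) = y)"

lemma mean_preserving_kernelD:
  assumes "mean_preserving_kernel K"
  shows "K \<in> borel \<rightarrow>\<^sub>M subprob_algebra borel" "prob_space (K y)" "sets (K y) = sets borel"
    "integrable (K y) (\<lambda>v. v)" "(\<integral>v. v \<partial>K y) = y"
  using assms unfolding mean_preserving_kernel_def by auto

lemma bind_kernel_in_P2:
  assumes p: "p \<in> P2" and K: "K \<in> borel \<rightarrow>\<^sub>M subprob_algebra borel" "\<And>y. prob_space (K y)"
    and moment: "\<And>y. integrable (K y) (\<lambda>v. (norm v)\<^sup>2)" "\<And>y. (\<integral>v. (norm v)\<^sup>2 \<partial>K y) \<le> A + B * (norm y)\<^sup>2"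
  shows "p \<bind> K \<in> P2"
proof -
  interpret prob_space p using P2_D(1)[OF p] .
  have K_p: "K \<in> p \<rightarrow>\<^sub>M subprob_algebra borel"
    by (rule measurable_P2[OF p K(1)])
  have sets_bind: "sets (p \<bind> K) = sets borel"
    by (rule sets_bind[OF sets_kernel[OF K_p] not_empty])
  have "(\<integral>\<^sup>+ v. ennreal ((norm v)\<^sup>2) \<partial>(p \<bind> K)) = (\<integral>\<^sup>+ y. (\<integral>\<^sup>+ v. ennreal ((norm v)\<^sup>2) \<partial>K y) \<partial>p)"
    by (rule nn_integral_bind[OF _ K_p]) simp
  also have "\<dots> = (\<integral>\<^sup>+ y. ennreal (\<integral>v. (norm v)\<^sup>2 \<partial>K y) \<partial>p)"
    using moment(1) by (intro nn_integral_cong nn_integral_eq_integral) auto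
  also have "\<dots> \<le> (\<integral>\<^sup>+ y. ennreal (A + B * (norm y)\<^sup>2) \<partial>p)"
    by (intro nn_integral_mono ennreal_leI moment(2))
  also have "\<dots> < \<infinity>"
  proof -
    have "integrable p (\<lambda>y. A + B * (norm y)\<^sup>2)"
      using P2_D(4)[OF p] by auto
    from integrableD(2)[OF this] show ?thesis
      by (simp add: less_top)
  qed
  finally have "integrable (p \<bind> K) (\<lambda>v. (norm v)\<^sup>2)"
    by (intro integrableI_nonneg) (auto simp: measurable_cong_sets[OF sets_bind refl])
  moreover have "prob_space (p \<bind> K)"
    by (rule prob_space_bind[OF AE_I2[OF K(2)] K_p])
  ultimately show ?thesis
    using sets_bind unfolding P2_def by blast
qed

lemma bind_mean_preserving_kernel_in_P2_bary:
  assumes p: "p \<in> P2_bary x" and K: "mean_preserving_kernel K" and pK: "p \<bind> K \<in> P2"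
  shows "p \<bind> K \<in> P2_bary x"
proof -
  have "p \<in> P2" and bar: "(\<integral>y. y \<partial>p) = x"
    using p unfolding P2_bary_def by auto
  have K_p: "K \<in> p \<rightarrow>\<^sub>M subprob_algebra borel"
    by (rule measurable_P2[OF \<open>p \<in> P2\<close> mean_preserving_kernelD(1)[OF K]])
  have "(\<integral>v. v \<partial>(p \<bind> K)) \<bullet> b = x \<bullet> b" for b
  proof -
    have "(\<integral>v. v \<partial>(p \<bind> K)) \<bullet> b = (\<integral>v. v \<bullet> b \<partial>(p \<bind> K))"
      using integrable_P2_id[OF pK] by simp
    also have "\<dots> = (\<integral>y. (\<integral>v. v \<bullet> b \<partial>K y) \<partial>p)"
      using P2_D(3)[OF \<open>p \<in> P2\<close>]
      by (intro integral_bind_kernel(2)[OF K_p _ integrable_inner_left[OF integrable_P2_id[OF pK]]]) auto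
    also have "\<dots> = (\<integral>y. y \<bullet> b \<partial>p)"
      using mean_preserving_kernelD(4,5)[OF K] by simp
    also have "\<dots> = x \<bullet> b"
      using integrable_P2_id[OF \<open>p \<in> P2\<close>] bar by simp
    finally show ?thesis .
  qed
  then show ?thesis
    using pK unfolding P2_bary_def by (auto intro: euclidean_eqI)
qed

lemma
  fixes M :: "'a::euclidean_space measure"
  assumes "prob_space M" and "sets M = sets borel"
  shows distr_fst_pair_const: "distr (distr M (borel \<Otimes>\<^sub>M borel) (\<lambda>v. (v, z))) borel fst = M"
    and distr_snd_pair_const: "distr (distr M (borel \<Otimes>\<^sub>M borel) (\<lambda>v. (v, z))) borel snd = return borel z"
proof -
  have pair: "(\<lambda>v. (v, z)) \<in> M \<rightarrow>\<^sub>M borel \<Otimes>\<^sub>M borel"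
    by (subst measurable_cong_sets[OF assms(2) refl]) simp
  show "distr (distr M (borel \<Otimes>\<^sub>M borel) (\<lambda>v. (v, z))) borel fst = M"
    by (simp add: distr_distr[OF measurable_fst pair] comp_def distr_id2[OF assms(2)[symmetric]])
  show "distr (distr M (borel \<Otimes>\<^sub>M borel) (\<lambda>v. (v, z))) borel snd = return borel z"
    by (simp add: distr_distr[OF measurable_snd pair] comp_def prob_space.distr_const[OF assms(1)])
qed

lemma bind_coupling_kernel:
  fixes K :: "'a::euclidean_space \<Rightarrow> 'a measure"
  defines "L \<equiv> \<lambda>w. distr (K (fst w)) (borel \<Otimes>\<^sub>M borel) (\<lambda>v. (v, snd w))"
  assumes \<pi>: "\<pi> \<in> Cpl p q"
    and K: "K \<in> borel \<rightarrow>\<^sub>M subprob_algebra borel" "\<And>y. prob_space (K y)" "\<And>y. sets (K y) = sets borel"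
  shows "L \<in> \<pi> \<rightarrow>\<^sub>M subprob_algebra (borel \<Otimes>\<^sub>M borel)" and "\<pi> \<bind> L \<in> Cpl (p \<bind> K) q"
proof -
  interpret prob_space \<pi> by (rule Cpl_D(1)[OF \<pi>])
  have "L \<in> borel \<Otimes>\<^sub>M borel \<rightarrow>\<^sub>M subprob_algebra (borel \<Otimes>\<^sub>M borel)"
    unfolding L_def
  proof (rule measurable_distr2[where M = borel])
    show "(\<lambda>w. K (fst w)) \<in> borel \<Otimes>\<^sub>M borel \<rightarrow>\<^sub>M subprob_algebra borel"
      by (rule measurable_compose[OF measurable_fst K(1)])
  qed measurable
  then show L: "L \<in> \<pi> \<rightarrow>\<^sub>M subprob_algebra (borel \<Otimes>\<^sub>M borel)"
    by (rule measurable_Cpl[OF \<pi>])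
  have L_fst: "distr (L w) borel fst = K (fst w)" and L_snd: "distr (L w) borel snd = return borel (snd w)" for w
    unfolding L_def using K(2,3) by (simp_all add: distr_fst_pair_const distr_snd_pair_const)
  have "distr (\<pi> \<bind> L) borel fst = \<pi> \<bind> (\<lambda>w. K (fst w))"
    unfolding L_fst[symmetric] by (rule distr_bind[OF L not_empty measurable_fst])
  also have "\<dots> = distr \<pi> borel fst \<bind> K"
    by (rule bind_distr[symmetric, OF measurable_Cpl[OF \<pi>] K(1) not_empty]) simp
  finally have fst: "distr (\<pi> \<bind> L) borel fst = p \<bind> K"
    unfolding Cpl_D(3)[OF \<pi>] .
  have "distr (\<pi> \<bind> L) borel snd = \<pi> \<bind> (\<lambda>w. return borel (snd w))"
    unfolding L_snd[symmetric] by (rule distr_bind[OF L not_empty measurable_snd])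
  also have "\<dots> = distr \<pi> borel snd"
    by (rule bind_return_distr'[OF not_empty]) (rule measurable_Cpl[OF \<pi>], simp)
  finally have snd: "distr (\<pi> \<bind> L) borel snd = q"
    unfolding Cpl_D(4)[OF \<pi>] .
  have "sets (\<pi> \<bind> L) = sets (borel \<Otimes>\<^sub>M borel)"
    by (rule sets_bind[OF sets_kernel[OF L] not_empty])
  moreover have "prob_space (\<pi> \<bind> L)"
  proof (rule prob_space_bind[OF AE_I2 L])
    fix w :: "'a \<times> 'a"
    have "(\<lambda>v. (v, snd w)) \<in> K (fst w) \<rightarrow>\<^sub>M borel \<Otimes>\<^sub>M borel"
      by (subst measurable_cong_sets[OF K(3) refl]) simp
    then show "prob_space (L w)"
      unfolding L_def by (rule prob_space.prob_space_distr[OF K(2)])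
  qed
  ultimately show "\<pi> \<bind> L \<in> Cpl (p \<bind> K) q"
    using fst snd unfolding Cpl_def by blast
qed

text \<open>The coupling transported by \<open>bind_coupling_kernel\<close> has the same covariance, because
  \<open>K\<close> preserves means.\<close>

lemma MCov_le_bind_mean_preserving_kernel:
  assumes p: "p \<in> P2" and q: "q \<in> P2" and K: "mean_preserving_kernel K" and pK: "p \<bind> K \<in> P2"
  shows "MCov p q \<le> MCov (p \<bind> K) q"
  unfolding MCov_def[of p q]
proof (rule cSUP_least)
  show "Cpl p q \<noteq> {}"
    using pair_measure_in_Cpl[OF p q] by blast
next
  fix \<pi> assume \<pi>: "\<pi> \<in> Cpl p q"
  interpret prob_space \<pi> by (rule Cpl_D(1)[OF \<pi>])
  define L where "L w = distr (K (fst w)) (borel \<Otimes>\<^sub>M borel) (\<lambda>v. (v, snd w))" for w :: "'a \<times> 'a"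
  note lift = bind_coupling_kernel[OF \<pi> mean_preserving_kernelD(1-3)[OF K], folded L_def]
  have inner_L: "(\<integral>u. (\<lambda>(y, z). y \<bullet> z) u \<partial>L w) = (\<lambda>(y, z). y \<bullet> z) w" for w
  proof -
    have "(\<lambda>v. (v, snd w)) \<in> K (fst w) \<rightarrow>\<^sub>M borel \<Otimes>\<^sub>M borel"
      by (subst measurable_cong_sets[OF mean_preserving_kernelD(3)[OF K] refl]) simp
    then have "(\<integral>u. (\<lambda>(y, z). y \<bullet> z) u \<partial>L w) = (\<integral>v. (\<lambda>(y, z). y \<bullet> z) (v, snd w) \<partial>K (fst w))"
      unfolding L_def by (rule integral_distr) simp
    also have "\<dots> = (\<integral>v. v \<bullet> snd w \<partial>K (fst w))"
      by simp
    also have "\<dots> = fst w \<bullet> snd w"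
      using mean_preserving_kernelD(4,5)[OF K] by simp
    finally show ?thesis by (cases w) simp
  qed
  have "integral\<^sup>L (\<pi> \<bind> L) (\<lambda>(y, z). y \<bullet> z) = (\<integral>w. (\<integral>u. (\<lambda>(y, z). y \<bullet> z) u \<partial>L w) \<partial>\<pi>)"
    by (rule integral_bind_kernel(2)[OF lift(1) _ integrable_inner_Cpl(1)[OF pK q lift(2)] not_empty]) simp
  then have "integral\<^sup>L \<pi> (\<lambda>(y, z). y \<bullet> z) = integral\<^sup>L (\<pi> \<bind> L) (\<lambda>(y, z). y \<bullet> z)"
    by (simp only: inner_L)
  also have "\<dots> \<le> MCov (p \<bind> K) q"
    by (rule integral_inner_le_MCov[OF pK q lift(2)])
  finally show "integral\<^sup>L \<pi> (\<lambda>(y, z). y \<bullet> z) \<le> MCov (p \<bind> K) q" .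
qed

section \<open>A mean-preserving kernel realising the convex hull\<close>

lemma measurable_index_of_open_cover:
  fixes U :: "'a::second_countable_topology \<Rightarrow> 'a set"
  assumes "\<And>c. open (U c)" and "\<And>c. c \<in> U c"
  obtains N :: "'a \<Rightarrow> nat" and cs :: "nat \<Rightarrow> 'a"
  where "N \<in> borel \<rightarrow>\<^sub>M count_space UNIV" and "\<And>y. y \<in> U (cs (N y))"
proof -
  obtain \<F> where \<F>: "\<F> \<subseteq> range U" "countable \<F>" "\<Union>\<F> = \<Union>(range U)"
    using Lindelof[of "range U"] assms(1) by blast
  then obtain C where C: "countable C" "\<F> = U ` C"
    using countable_subset_image[of \<F> U UNIV] by blast
  have cover: "\<Union>(U ` C) = UNIV"
    using \<F>(3) C(2) assms(2) by auto
  then have "C \<noteq> {}" by auto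
  define cs where "cs = from_nat_into C"
  have "range cs = C"
    unfolding cs_def using \<open>C \<noteq> {}\<close> C(1) by simp
  then have covered: "\<exists>n. y \<in> U (cs n)" for y
    using cover by (metis UNIV_I UN_E rangeE)
  define N where "N y = (LEAST n. y \<in> U (cs n))" for y
  have "Measurable.pred borel (\<lambda>y. y \<in> U (cs n))" for n
    using assms(1) by (simp add: pred_def)
  then have "N \<in> borel \<rightarrow>\<^sub>M count_space UNIV"
    unfolding N_def by (rule measurable_Least)
  moreover have "y \<in> U (cs (N y))" for y
    unfolding N_def by (rule LeastI_ex[OF covered])
  ultimately show ?thesis
    by (rule that)
qed

lemma
  fixes W :: "'a::euclidean_space pmf" and f :: "'a \<Rightarrow> 'b::{banach, second_countable_topology}"
  assumes "finite (set_pmf W)" and "f \<in> borel_measurable borel"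
  shows integrable_translated_pmf: "integrable (distr W borel (\<lambda>v. v + t)) f"
    and integral_translated_pmf: "(\<integral>u. f u \<partial>distr W borel (\<lambda>v. v + t)) = (\<integral>v. f (v + t) \<partial>W)"
  using assms by (simp_all add: integrable_distr_eq integral_distr integrable_measure_pmf_finite)

lemma
  fixes W :: "'a::euclidean_space pmf"
  shows prob_space_translated_pmf: "prob_space (distr W borel (\<lambda>v. v + t))"
    and sets_translated_pmf: "sets (distr W borel (\<lambda>v. v + t)) = sets borel"
  by (auto intro: prob_space.prob_space_distr prob_space_measure_pmf)

lemma mean_translated_pmf:
  fixes W :: "'a::euclidean_space pmf"
  assumes "finite (set_pmf W)"
  shows "(\<integral>u. u \<partial>distr W borel (\<lambda>v. v + t)) = (\<integral>v. v \<partial>W) + t"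
  using assms
  by (simp add: integral_translated_pmf Bochner_Integration.integral_add integrable_measure_pmf_finite
      measure_pmf.prob_space)

lemma measurable_translated_pmf_kernel:
  fixes W :: "nat \<Rightarrow> 'a::euclidean_space pmf" and cs :: "nat \<Rightarrow> 'a"
  assumes "N \<in> borel \<rightarrow>\<^sub>M count_space UNIV"
  shows "(\<lambda>y. distr (W (N y)) borel (\<lambda>v. v + (y - cs (N y)))) \<in> borel \<rightarrow>\<^sub>M subprob_algebra borel"
proof (rule measurable_compose_countable'[OF _ assms])
  fix n
  show "(\<lambda>y. distr (W n) borel (\<lambda>v. v + (y - cs n))) \<in> borel \<rightarrow>\<^sub>M subprob_algebra borel"
  proof (rule measurable_distr2[where M = "measure_pmf (W n)"])
    have "(\<lambda>w. snd w) \<in> borel \<Otimes>\<^sub>M measure_pmf (W n) \<rightarrow>\<^sub>M borel"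
      by (rule measurable_compose[OF measurable_snd]) simp
    then show "(\<lambda>(y, v). v + (y - cs n)) \<in> borel \<Otimes>\<^sub>M measure_pmf (W n) \<rightarrow>\<^sub>M borel"
      unfolding case_prod_beta' by (intro borel_measurable_add borel_measurable_diff measurable_fst) simp_all
  qed (auto intro!: measurable_const prob_space_imp_subprob_space simp: space_subprob_algebra)
qed simp

lemma open_translated_pmf_integral_less:
  fixes W :: "'a::euclidean_space pmf" and \<psi> g :: "'a \<Rightarrow> real"
  assumes "finite (set_pmf W)" and "continuous_on UNIV \<psi>" and "continuous_on UNIV g"
  shows "open {y. (\<integral>v. \<psi> (v + (y - c)) \<partial>W) < g y}"
proof -
  have "(\<integral>v. \<psi> (v + (y - c)) \<partial>W) = (\<Sum>v\<in>set_pmf W. \<psi> (v + (y - c)) * pmf W v)" for y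
    using assms(1) by (rule integral_measure_pmf_real) auto
  moreover have "continuous_on UNIV (\<lambda>y. \<Sum>v\<in>set_pmf W. \<psi> (v + (y - c)) * pmf W v)"
    by (intro continuous_on_sum continuous_on_mult_right
        continuous_on_compose2[OF assms(2)] continuous_intros) auto
  then have "open {y. (\<Sum>v\<in>set_pmf W. \<psi> (v + (y - c)) * pmf W v) < g y}"
    using assms(3) by (rule open_Collect_less)
  ultimately show ?thesis
    by simp
qed

text \<open>Each point \<open>c\<close> carries a finitely supported law \<open>W c\<close> with barycenter \<open>c\<close> that almost
  attains \<open>conv_fun \<psi> c\<close>; by continuity its translate to \<open>y\<close> still does for \<open>y\<close> in an open
  neighbourhood of \<open>c\<close>, and a countable subcover yields a Borel choice of neighbourhood.\<close>

lemma ex_mean_preserving_kernel_conv_fun: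
  fixes \<psi> :: "'a::euclidean_space \<Rightarrow> real"
  assumes \<psi>: "\<psi> \<in> C2" and "0 < \<epsilon>"
  obtains K where "mean_preserving_kernel K"
    and "\<And>y f. f \<in> borel_measurable borel \<Longrightarrow> integrable (K y) (f :: 'a \<Rightarrow> real)"
    and "\<And>y. (\<integral>v. \<psi> v \<partial>K y) < conv_fun \<psi> y + \<epsilon>"
proof -
  obtain l where "\<And>y. l + (norm y)\<^sup>2 / 2 \<le> \<psi> y"
    using C2_E[OF \<psi>] by metis
  then have "\<forall>c. \<exists>W. finite (set_pmf W) \<and> (\<integral>v. v \<partial>W) = c \<and> (\<integral>v. \<psi> v \<partial>W) < conv_fun \<psi> c + \<epsilon>"
    using conv_fun_finite_approx[OF convex_on_half_norm_square] \<open>0 < \<epsilon>\<close> by blast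
  then obtain W where W: "\<And>c. finite (set_pmf (W c))" "\<And>c. (\<integral>v. v \<partial>W c) = c"
    "\<And>c. (\<integral>v. \<psi> v \<partial>W c) < conv_fun \<psi> c + \<epsilon>"
    by metis
  define U where "U c = {y. (\<integral>v. \<psi> (v + (y - c)) \<partial>W c) < conv_fun \<psi> y + \<epsilon>}" for c
  have "open (U c)" "c \<in> U c" for c
    unfolding U_def using W C2_D(2)[OF \<psi>] C2_D(2)[OF conv_fun_in_C2[OF \<psi>]]
    by (auto intro!: open_translated_pmf_integral_less continuous_intros)
  then obtain N :: "'a \<Rightarrow> nat" and cs where N: "N \<in> borel \<rightarrow>\<^sub>M count_space UNIV" "\<And>y. y \<in> U (cs (N y))"
    using measurable_index_of_open_cover by blast
  define K where "K y = distr (W (cs (N y))) borel (\<lambda>v. v + (y - cs (N y)))" for y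
  have integrable: "integrable (K y) f" if "f \<in> borel_measurable borel" for y and f :: "'a \<Rightarrow> real"
    unfolding K_def using W(1) that by (rule integrable_translated_pmf)
  have "(\<integral>v. \<psi> v \<partial>K y) < conv_fun \<psi> y + \<epsilon>" for y
    using N(2)[of y] W(1) C2_D(1)[OF \<psi>] unfolding K_def U_def by (simp add: integral_translated_pmf)
  moreover have "mean_preserving_kernel K"
    unfolding mean_preserving_kernel_def K_def
    using measurable_translated_pmf_kernel[OF N(1), of "\<lambda>n. W (cs n)" cs] W(1,2)
    by (simp add: prob_space_translated_pmf integrable_translated_pmf mean_translated_pmf)
  ultimately show ?thesis
    using that integrable by blast
qed

section \<open>The dual functional does not see the convex hull\<close>

lemma integral_ge_half_second_moment:
  assumes "prob_space M" "integrable M \<psi>" "integrable M (\<lambda>y. (norm y)\<^sup>2)"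
    and "\<And>y. l + (norm y)\<^sup>2 / 2 \<le> \<psi> y"
  shows "l + (\<integral>y. (norm y)\<^sup>2 \<partial>M) / 2 \<le> integral\<^sup>L M \<psi>"
proof -
  interpret prob_space M by fact
  have "(\<integral>y. l + (norm y)\<^sup>2 / 2 \<partial>M) \<le> integral\<^sup>L M \<psi>"
    using assms(2-4) by (intro integral_mono) auto
  then show ?thesis
    using assms(3) by (simp add: prob_space)
qed

lemma bdd_below_phi_terms:
  assumes \<psi>: "\<psi> \<in> C2" and q: "q \<in> P2"
  shows "bdd_below ((\<lambda>p. integral\<^sup>L p \<psi> - MCov p q) ` P2_bary x)"
proof -
  obtain l where lower: "\<And>y. l + (norm y)\<^sup>2 / 2 \<le> \<psi> y"
    using C2_E[OF \<psi>] by metis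
  have "l - (\<integral>z. (norm z)\<^sup>2 \<partial>q) / 2 \<le> integral\<^sup>L p \<psi> - MCov p q" if "p \<in> P2" for p
    using integral_ge_half_second_moment[OF P2_D(1)[OF that] integrable_C2[OF \<psi> that] P2_D(4)[OF that] lower]
      MCov_le_second_moments[OF that q] by fastforce
  then show ?thesis
    unfolding P2_bary_def by (intro bdd_belowI) blast
qed

lemma ex_P2_bary_conv_fun_improvement:
  assumes \<psi>: "\<psi> \<in> C2" and q: "q \<in> P2" and p: "p \<in> P2_bary x" and "0 < \<epsilon>"
  obtains p' where "p' \<in> P2_bary x" "integral\<^sup>L p' \<psi> \<le> integral\<^sup>L p (conv_fun \<psi>) + \<epsilon>"
    and "MCov p q \<le> MCov p' q"
proof -
  obtain K where K: "mean_preserving_kernel K"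
    and K_int: "\<And>y f. f \<in> borel_measurable borel \<Longrightarrow> integrable (K y) (f :: 'a \<Rightarrow> real)"
    and K_\<psi>: "\<And>y. (\<integral>v. \<psi> v \<partial>K y) < conv_fun \<psi> y + \<epsilon>"
    using ex_mean_preserving_kernel_conv_fun[OF \<psi> \<open>0 < \<epsilon>\<close>] by blast
  obtain l a k where lower: "\<And>y. l + (norm y)\<^sup>2 / 2 \<le> \<psi> y" and upper: "\<And>y. \<psi> y \<le> a + k * (norm y)\<^sup>2"
    using C2_E[OF \<psi>] by metis
  have "p \<in> P2"
    using p unfolding P2_bary_def by blast
  interpret prob_space p using P2_D(1)[OF \<open>p \<in> P2\<close>] .
  have half_moment: "l + (\<integral>v. (norm v)\<^sup>2 \<partial>K y) / 2 \<le> (\<integral>v. \<psi> v \<partial>K y)" for y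
    using lower C2_D(1)[OF \<psi>]
    by (intro integral_ge_half_second_moment mean_preserving_kernelD(2)[OF K] K_int) auto
  have moment: "(\<integral>v. (norm v)\<^sup>2 \<partial>K y) \<le> 2 * (a + \<epsilon> - l) + 2 * k * (norm y)\<^sup>2" for y
    using half_moment[of y] K_\<psi>[of y] conv_fun_le_C2[OF \<psi>, of y] upper[of y]
    by argo
  have pK: "p \<bind> K \<in> P2"
    by (rule bind_kernel_in_P2[OF \<open>p \<in> P2\<close> mean_preserving_kernelD(1,2)[OF K] K_int moment]) simp
  have K_p: "K \<in> p \<rightarrow>\<^sub>M subprob_algebra borel"
    by (rule measurable_P2[OF \<open>p \<in> P2\<close> mean_preserving_kernelD(1)[OF K]])
  have "integral\<^sup>L (p \<bind> K) \<psi> = (\<integral>y. (\<integral>v. \<psi> v \<partial>K y) \<partial>p)"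
    by (rule integral_bind_kernel(2)[OF K_p C2_D(1)[OF \<psi>] integrable_C2[OF \<psi> pK] not_empty])
  also have "\<dots> \<le> (\<integral>y. conv_fun \<psi> y + \<epsilon> \<partial>p)"
    using K_\<psi> integrable_C2[OF conv_fun_in_C2[OF \<psi>] \<open>p \<in> P2\<close>]
      integral_bind_kernel(1)[OF K_p C2_D(1)[OF \<psi>] integrable_C2[OF \<psi> pK] not_empty]
    by (intro integral_mono less_imp_le) auto
  also have "\<dots> = integral\<^sup>L p (conv_fun \<psi>) + \<epsilon>"
    using integrable_C2[OF conv_fun_in_C2[OF \<psi>] \<open>p \<in> P2\<close>] by (simp add: prob_space)
  finally show ?thesis
    using that bind_mean_preserving_kernel_in_P2_bary[OF p K pK]
      MCov_le_bind_mean_preserving_kernel[OF \<open>p \<in> P2\<close> q K pK] by blast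
qed

lemma phi_conv_fun:
  assumes \<psi>: "\<psi> \<in> C2" and q: "q \<in> P2"
  shows "phi q (conv_fun \<psi>) = phi q \<psi>"
proof (rule ext, rule antisym)
  fix x :: 'a
  have ne: "P2_bary x \<noteq> {}"
    using return_in_P2_bary by blast
  have P2: "p \<in> P2" if "p \<in> P2_bary x" for p
    using that unfolding P2_bary_def by blast
  show "phi q (conv_fun \<psi>) x \<le> phi q \<psi> x"
    unfolding phi_def
  proof (rule cINF_mono[OF ne bdd_below_phi_terms[OF conv_fun_in_C2[OF \<psi>] q]])
    fix p assume "p \<in> P2_bary x"
    moreover have "integral\<^sup>L p (conv_fun \<psi>) \<le> integral\<^sup>L p \<psi>"
      using P2[OF \<open>p \<in> P2_bary x\<close>] conv_fun_le_C2[OF \<psi>]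
      by (intro integral_mono integrable_C2[OF conv_fun_in_C2[OF \<psi>]] integrable_C2[OF \<psi>])
    ultimately show "\<exists>p'\<in>P2_bary x. integral\<^sup>L p' (conv_fun \<psi>) - MCov p' q \<le> integral\<^sup>L p \<psi> - MCov p q"
      by (intro bexI[of _ p]) auto
  qed
  show "phi q \<psi> x \<le> phi q (conv_fun \<psi>) x"
    unfolding phi_def
  proof (rule cINF_greatest[OF ne])
    fix p assume p: "p \<in> P2_bary x"
    show "(INF p\<in>P2_bary x. integral\<^sup>L p \<psi> - MCov p q) \<le> integral\<^sup>L p (conv_fun \<psi>) - MCov p q"
    proof (rule field_le_epsilon)
      fix \<epsilon> :: real assume "0 < \<epsilon>"
      then obtain p' where p': "p' \<in> P2_bary x" "integral\<^sup>L p' \<psi> \<le> integral\<^sup>L p (conv_fun \<psi>) + \<epsilon>"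
        "MCov p q \<le> MCov p' q"
        by (rule ex_P2_bary_conv_fun_improvement[OF \<psi> q p])
      have "(INF p\<in>P2_bary x. integral\<^sup>L p \<psi> - MCov p q) \<le> integral\<^sup>L p' \<psi> - MCov p' q"
        by (rule cINF_lower[OF bdd_below_phi_terms[OF \<psi> q] p'(1)])
      also have "\<dots> \<le> integral\<^sup>L p (conv_fun \<psi>) - MCov p q + \<epsilon>"
        using p'(2,3) by linarith
      finally show "(INF p\<in>P2_bary x. integral\<^sup>L p \<psi> - MCov p q) \<le> integral\<^sup>L p (conv_fun \<psi>) - MCov p q + \<epsilon>" .
    qed
  qed
qed

lemma Dtilde_conv_fun_le:
  assumes \<psi>: "\<psi> \<in> C2" and \<nu>: "\<nu> \<in> P2" and q: "q \<in> P2"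
  shows "Dtilde \<mu> \<nu> q (conv_fun \<psi>) \<le> Dtilde \<mu> \<nu> q \<psi>"
proof -
  have "integral\<^sup>L \<nu> (conv_fun \<psi>) \<le> integral\<^sup>L \<nu> \<psi>"
    using conv_fun_le_C2[OF \<psi>]
    by (intro integral_mono integrable_C2[OF conv_fun_in_C2[OF \<psi>] \<nu>] integrable_C2[OF \<psi> \<nu>])
  then show ?thesis
    unfolding Dtilde_def phi_conv_fun[OF \<psi> q] by simp
qed

theorem proposition2p3:
  fixes \<mu> \<nu> q :: "'a::euclidean_space measure"
  assumes "\<mu> \<in> P2" and "\<nu> \<in> P2" and "q \<in> P2"
    and "convex_order \<mu> \<nu>"
    and "no_mass_small_sets q"
  shows "(\<forall>\<psi> \<in> C2. Dtilde \<mu> \<nu> q (conv_fun \<psi>) \<le> Dtilde \<mu> \<nu> q \<psi>)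
       \<and> (INF \<psi> \<in> C2. ereal (Dtilde \<mu> \<nu> q \<psi>))
           = (INF \<psi> \<in> {\<psi> \<in> C2. convex_on UNIV \<psi>}. ereal (Dtilde \<mu> \<nu> q \<psi>))"
proof
  show D_le: "\<forall>\<psi> \<in> C2. Dtilde \<mu> \<nu> q (conv_fun \<psi>) \<le> Dtilde \<mu> \<nu> q \<psi>"
    using Dtilde_conv_fun_le[OF _ assms(2,3)] by blast
  have conv_fun_convex: "conv_fun \<psi> \<in> {\<psi> \<in> C2. convex_on UNIV \<psi>}" if "\<psi> \<in> C2" for \<psi> :: "'a \<Rightarrow> real"
    using conv_fun_in_C2[OF that] convex_on_conv_fun_C2[OF that] by blast
  show "(INF \<psi> \<in> C2. ereal (Dtilde \<mu> \<nu> q \<psi>)) = (INF \<psi> \<in> {\<psi> \<in> C2. convex_on UNIV \<psi>}. ereal (Dtilde \<mu> \<nu> q \<psi>))"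
  proof (rule antisym)
    show "(INF \<psi> \<in> C2. ereal (Dtilde \<mu> \<nu> q \<psi>)) \<le> (INF \<psi> \<in> {\<psi> \<in> C2. convex_on UNIV \<psi>}. ereal (Dtilde \<mu> \<nu> q \<psi>))"
      by (rule INF_superset_mono) auto
    show "(INF \<psi> \<in> {\<psi> \<in> C2. convex_on UNIV \<psi>}. ereal (Dtilde \<mu> \<nu> q \<psi>)) \<le> (INF \<psi> \<in> C2. ereal (Dtilde \<mu> \<nu> q \<psi>))"
      by (intro INF_greatest INF_lower2[OF conv_fun_convex]) (use D_le in auto)
  qed
qed

end
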